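(* Let $\mathbf{QL}_1\subseteq\mathbf{QL}_2$ be intermediate predicate logics with the same propositional fragment $\mathbf{L}$. Suppose Herbrand's theorem for existential formulas holds in $\mathbf{QL}_2$. Then for every existential formula $A$, $\vdash_{\mathbf{QL}_1}A$ iff $\vdash_{\mathbf{QL}_2}A$. If moreover $\mathbf{QL}_1$ proves all instances of $\forall x(C(x)\lor B)\to(\forall x\,C(x)\lor B)$ ($x$ not free in $B$), then the same equivalence holds for every prenex formula $A$.
   Context: Intermediate predicate logic: a set of first-order formulas containing intuitionistic predicate logic, contained in classical predicate logic, closed under substitution, modus ponens and the quantifier rules (from $B\to A(x)$ infer $B\to\forall y\,A(y)$; from $A(x)\to B$ infer $\exists y\,A(y)\to B$; $x$ not free in the conclusion). The propositional fragment is the set of its propositional formulas; $\vdash_{\mathbf{L}}$ on quantifier-free formulas means derivability by substitution instances of theorems of $\mathbf{L}$ and modus ponens. An existential formula is one of the form $\exists x_1\dots\exists x_n\,A'(x_1,\dots,x_n)$ with $A'$ quantifier-free. Herbrand's theorem for existential formulas holds in $\mathbf{QL}_2$ if whenever $\vdash_{\mathbf{QL}_2}\exists x_1\dots\exists x_n\,A'(x_1,\dots,x_n)$ ($A'$ quantifier-free), there are terms $t_{ij}$ with $\vdash_{\mathbf{L}}\bigvee_{j=1}^k A'(t_{1j},\dots,t_{nj})$. For a prenex formula $A$, its Herbrand form $H(A)$ is the existential formula obtained by deleting each universal quantifier $\forall y$ and replacing $y$ by $f_y(x_1,\dots,x_k)$, where $f_y$ is a new function symbol and $x_1,\dots,x_k$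 are the existentially quantified variables whose quantifiers precede $\forall y$. *)

theory Defs
  imports Main
begin

text \<open>Terms: variables (de Bruijn indices) and applications of function symbols
  (infinitely many function symbols of every arity; 0-ary ones are constants).\<close>
datatype trm = Var nat | Fun nat "trm list"

text \<open>Predicate symbols are named by a natural number; the arity is the
  length of the argument list (so a predicate is identified by name and arity).
  Propositional variables are 0-ary predicates. \<open>Forall\<close>/\<open>Exists\<close> bind index 0.\<close>
datatype fm =
    FF
  | Pr nat "trm list"
  | Conj fm fm
  | Disj fm fm
  | Impl fm fm
  | Forall fm
  | Exists fm

definition Neg :: "fm \<Rightarrow> fm" where "Neg A = Impl A FF"

fun substt :: "(nat \<Rightarrow> trm) \<Rightarrow> trm \<Rightarrow> trm" where
  "substt s (Var i) = s i"
| "substt s (Fun f ts) = Fun f (map (substt s) ts)"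

definition shift_sub :: "(nat \<Rightarrow> trm) \<Rightarrow> nat \<Rightarrow> trm" where
  "shift_sub s i = (case i of 0 \<Rightarrow> Var 0 | Suc j \<Rightarrow> substt (\<lambda>k. Var (Suc k)) (s j))"

fun substf :: "(nat \<Rightarrow> trm) \<Rightarrow> fm \<Rightarrow> fm" where
  "substf s FF = FF"
| "substf s (Pr p ts) = Pr p (map (substt s) ts)"
| "substf s (Conj A B) = Conj (substf s A) (substf s B)"
| "substf s (Disj A B) = Disj (substf s A) (substf s B)"
| "substf s (Impl A B) = Impl (substf s A) (substf s B)"
| "substf s (Forall A) = Forall (substf (shift_sub s) A)"
| "substf s (Exists A) = Exists (substf (shift_sub s) A)"

text \<open>Shift all free variables up by one (so variable 0 is not free in the result).\<close>
definition liftf :: "fm \<Rightarrow> fm" where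
  "liftf A = substf (\<lambda>i. Var (Suc i)) A"

definition inst1 :: "fm \<Rightarrow> trm \<Rightarrow> fm" where
  "inst1 A t = substf (\<lambda>i. case i of 0 \<Rightarrow> t | Suc j \<Rightarrow> Var j) A"

text \<open>Uniform predicate substitution: the predicate p of arity n is replaced by the
  formula \<open>\<sigma> p n\<close>, whose free variables 0..n-1 are the argument places and whose
  remaining free variables n, n+1, ... are the parameters 0, 1, ... (shifted
  correctly under binders; d counts the binders passed).\<close>
fun psubst_d :: "(nat \<Rightarrow> nat \<Rightarrow> fm) \<Rightarrow> nat \<Rightarrow> fm \<Rightarrow> fm" where
  "psubst_d \<sigma> d FF = FF"
| "psubst_d \<sigma> d (Pr p ts) =
     substf (\<lambda>i. if i < length ts then ts ! i else Var (i - length ts + d)) (\<sigma> p (length ts))"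
| "psubst_d \<sigma> d (Conj A B) = Conj (psubst_d \<sigma> d A) (psubst_d \<sigma> d B)"
| "psubst_d \<sigma> d (Disj A B) = Disj (psubst_d \<sigma> d A) (psubst_d \<sigma> d B)"
| "psubst_d \<sigma> d (Impl A B) = Impl (psubst_d \<sigma> d A) (psubst_d \<sigma> d B)"
| "psubst_d \<sigma> d (Forall A) = Forall (psubst_d \<sigma> (Suc d) A)"
| "psubst_d \<sigma> d (Exists A) = Exists (psubst_d \<sigma> (Suc d) A)"

definition psubst :: "(nat \<Rightarrow> nat \<Rightarrow> fm) \<Rightarrow> fm \<Rightarrow> fm" where
  "psubst \<sigma> A = psubst_d \<sigma> 0 A"

fun qfree :: "fm \<Rightarrow> bool" where
  "qfree FF = True"
| "qfree (Pr p ts) = True"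
| "qfree (Conj A B) = (qfree A \<and> qfree B)"
| "qfree (Disj A B) = (qfree A \<and> qfree B)"
| "qfree (Impl A B) = (qfree A \<and> qfree B)"
| "qfree (Forall A) = False"
| "qfree (Exists A) = False"

fun propositional :: "fm \<Rightarrow> bool" where
  "propositional FF = True"
| "propositional (Pr p ts) = (ts = [])"
| "propositional (Conj A B) = (propositional A \<and> propositional B)"
| "propositional (Disj A B) = (propositional A \<and> propositional B)"
| "propositional (Impl A B) = (propositional A \<and> propositional B)"
| "propositional (Forall A) = False"
| "propositional (Exists A) = False"

inductive deriv :: "fm set \<Rightarrow> fm \<Rightarrow> bool" for Ax :: "fm set" where
  ax_extra: "A \<in> Ax \<Longrightarrow> deriv Ax A"
| ax_K: "deriv Ax (Impl A (Impl B A))"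
| ax_S: "deriv Ax (Impl (Impl A B) (Impl (Impl A (Impl B C)) (Impl A C)))"
| ax_ConjI: "deriv Ax (Impl A (Impl B (Conj A B)))"
| ax_ConjE1: "deriv Ax (Impl (Conj A B) A)"
| ax_ConjE2: "deriv Ax (Impl (Conj A B) B)"
| ax_DisjI1: "deriv Ax (Impl A (Disj A B))"
| ax_DisjI2: "deriv Ax (Impl B (Disj A B))"
| ax_DisjE: "deriv Ax (Impl (Impl A C) (Impl (Impl B C) (Impl (Disj A B) C)))"
| ax_FF: "deriv Ax (Impl FF A)"
| ax_AllE: "deriv Ax (Impl (Forall A) (inst1 A t))"
| ax_ExI: "deriv Ax (Impl (inst1 A t) (Exists A))"
| mp: "deriv Ax (Impl A B) \<Longrightarrow> deriv Ax A \<Longrightarrow> deriv Ax B"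
| all_rule: "deriv Ax (Impl (liftf B) A) \<Longrightarrow> deriv Ax (Impl B (Forall A))"
| ex_rule: "deriv Ax (Impl A (liftf B)) \<Longrightarrow> deriv Ax (Impl (Exists A) B)"

definition IQC :: "fm set" where "IQC = {A. deriv {} A}"

definition CQC :: "fm set" where
  "CQC = {A. deriv {Impl (Neg (Neg B)) B | B. True} A}"

definition intermediate :: "fm set \<Rightarrow> bool" where
  "intermediate L \<longleftrightarrow>
     IQC \<subseteq> L \<and> L \<subseteq> CQC
   \<and> (\<forall>A B. Impl A B \<in> L \<longrightarrow> A \<in> L \<longrightarrow> B \<in> L)
   \<and> (\<forall>A B. Impl (liftf B) A \<in> L \<longrightarrow> Impl B (Forall A) \<in> L)
   \<and> (\<forall>A B. Impl A (liftf B) \<in> L \<longrightarrow> Impl (Exists A) B \<in> L)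
   \<and> (\<forall>\<sigma> A. A \<in> L \<longrightarrow> psubst \<sigma> A \<in> L)"

definition prop_fragment :: "fm set \<Rightarrow> fm set" where
  "prop_fragment L = {A \<in> L. propositional A}"

text \<open>\<open>provL P A\<close>: derivability (of quantifier-free formulas) from substitution
  instances of the propositional theorems P (propositional variables replaced by
  quantifier-free formulas) by modus ponens.\<close>
inductive provL :: "fm set \<Rightarrow> fm \<Rightarrow> bool" for P :: "fm set" where
  inst: "A \<in> P \<Longrightarrow> (\<forall>p. qfree (\<sigma> p 0)) \<Longrightarrow> provL P (psubst \<sigma> A)"
| mpL: "provL P (Impl A B) \<Longrightarrow> provL P A \<Longrightarrow> provL P B"

text \<open>\<open>exs n A\<close> = \<open>\<exists>x1 ... \<exists>xn. A\<close>; inside A, \<open>x_n\<close> is index 0, ..., \<open>x_1\<close> is index n-1,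
  and free variables of the whole formula are indices \<open>\<ge> n\<close>.\<close>
definition exs :: "nat \<Rightarrow> fm \<Rightarrow> fm" where
  "exs n A = (Exists ^^ n) A"

definition existential :: "fm \<Rightarrow> bool" where
  "existential A \<longleftrightarrow> (\<exists>n A'. qfree A' \<and> A = exs n A')"

definition inst_n :: "nat \<Rightarrow> fm \<Rightarrow> (nat \<Rightarrow> trm) \<Rightarrow> fm" where
  "inst_n n A' ts = substf (\<lambda>i. if i < n then ts i else Var (i - n)) A'"

fun Disjs :: "fm list \<Rightarrow> fm" where
  "Disjs [] = FF"
| "Disjs [A] = A"
| "Disjs (A # As) = Disj A (Disjs As)"

definition herbrand_existential :: "fm set \<Rightarrow> bool" where
  "herbrand_existential L \<longleftrightarrow>
     (\<forall>n A'. qfree A' \<longrightarrow> exs n A' \<in> L \<longrightarrow>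
        (\<exists>tss. tss \<noteq> [] \<and> provL (prop_fragment L) (Disjs (map (inst_n n A') tss))))"

inductive prenex :: "fm \<Rightarrow> bool" where
  "qfree A \<Longrightarrow> prenex A"
| "prenex A \<Longrightarrow> prenex (Forall A)"
| "prenex A \<Longrightarrow> prenex (Exists A)"

definition CD_instances :: "fm set" where
  "CD_instances = {Impl (Forall (Disj C (liftf B))) (Disj (Forall C) B) | C B. True}"

end

theory Submission
  imports Defs "HOL-Library.Countable"
begin

(* For existential formulas: Herbrand's theorem turns a QL2-proof into a propositional
   derivation of a disjunction of instances of the matrix.  That derivation uses only
   substitution instances of the common propositional fragment, so the disjunction is in
   QL1, and each disjunct implies the formula intuitionistically.

   For a prenex formula A, A implies its Herbrand form intuitionistically, which gives a
   propositional derivation of a disjunction of Herbrand instances.  Replacing every Skolem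
   term by a variable of its own keeps the derivation propositional and turns the j-th
   disjunct into the matrix of A instantiated along a path of terms.  The quantifiers of A
   are then restored one at a time, simultaneously in all disjuncts: an existential one by
   A(t) \<longrightarrow> \<exists>x A(x); a universal one on the path whose last instantiated term is largest.
   The variable of that term occurs only in the disjuncts passing through the same node, so
   it can be generalised, and CD moves the quantifier past the remaining disjuncts. *)

abbreviation lift_trm :: "trm \<Rightarrow> trm" where
  "lift_trm t \<equiv> substt (\<lambda>k. Var (Suc k)) t"

definition scons :: "trm \<Rightarrow> (nat \<Rightarrow> trm) \<Rightarrow> nat \<Rightarrow> trm" where
  "scons t s i = (case i of 0 \<Rightarrow> t | Suc j \<Rightarrow> s j)"

lemma scons_simps [simp]: "scons t s 0 = t" "scons t s (Suc j) = s j"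
  by (auto simp: scons_def)

lemma inst1_scons: "inst1 A t = substf (scons t Var) A"
  unfolding inst1_def scons_def by simp

lemma shift_sub_0 [simp]: "shift_sub s 0 = Var 0"
  and shift_sub_Suc [simp]: "shift_sub s (Suc j) = lift_trm (s j)"
  by (auto simp: shift_sub_def)

lemma substt_Var [simp]: "substt Var t = t"
  by (induction t) (auto simp: map_idI)

lemma shift_sub_Var [simp]: "shift_sub Var = Var"
  by (auto simp: shift_sub_def fun_eq_iff split: nat.split)

lemma substf_Var [simp]: "substf Var A = A"
  by (induction A) (auto simp: map_idI)

lemma substt_substt: "substt s (substt s' t) = substt (\<lambda>i. substt s (s' i)) t"
  by (induction t) auto

lemma shift_sub_comp:
  "shift_sub (\<lambda>i. substt s (s' i)) = (\<lambda>i. substt (shift_sub s) (shift_sub s' i))"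
proof
  fix i
  show "shift_sub (\<lambda>i. substt s (s' i)) i = substt (shift_sub s) (shift_sub s' i)"
    by (cases i) (auto simp: substt_substt)
qed

lemma substf_substf: "substf s (substf s' A) = substf (\<lambda>i. substt s (s' i)) A"
  by (induction A arbitrary: s s') (auto simp: substt_substt shift_sub_comp)

lemma scons_shift_sub: "(\<lambda>i. substt (scons t Var) (shift_sub s i)) = scons t s"
proof
  fix i
  show "substt (scons t Var) (shift_sub s i) = scons t s i"
    by (cases i) (simp_all add: substt_substt)
qed

lemma inst1_shift_sub: "inst1 (substf (shift_sub s) A) t = substf (scons t s) A"
  unfolding inst1_scons substf_substf scons_shift_sub ..

lemma scons_Var_0_lift: "scons (Var 0) (\<lambda>k. Var (Suc k)) = Var"
proof
  fix i
  show "scons (Var 0) (\<lambda>k. Var (Suc k)) i = Var i" by (cases i) auto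
qed

fun fvt :: "trm \<Rightarrow> nat set" where
  "fvt (Var i) = {i}"
| "fvt (Fun f ts) = (\<Union>t\<in>set ts. fvt t)"

fun fvf :: "fm \<Rightarrow> nat set" where
  "fvf FF = {}"
| "fvf (Pr p ts) = (\<Union>t\<in>set ts. fvt t)"
| "fvf (Conj A B) = fvf A \<union> fvf B"
| "fvf (Disj A B) = fvf A \<union> fvf B"
| "fvf (Impl A B) = fvf A \<union> fvf B"
| "fvf (Forall A) = {j. Suc j \<in> fvf A}"
| "fvf (Exists A) = {j. Suc j \<in> fvf A}"

lemma finite_fvt [simp]: "finite (fvt t)"
  by (induction t) auto

lemma finite_fvf [simp]: "finite (fvf A)"
proof (induction A)
  case (Forall A)
  have "{j. Suc j \<in> fvf A} = Suc -` fvf A" by auto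
  then show ?case using Forall.IH by (simp add: finite_vimageI)
next
  case (Exists A)
  have "{j. Suc j \<in> fvf A} = Suc -` fvf A" by auto
  then show ?case using Exists.IH by (simp add: finite_vimageI)
qed auto

lemma fvf_Disjs: "fvf (Disjs As) \<subseteq> (\<Union>A\<in>set As. fvf A)"
  by (induction As rule: Disjs.induct) auto

lemma substt_cong: "(\<And>i. i \<in> fvt t \<Longrightarrow> s i = s' i) \<Longrightarrow> substt s t = substt s' t"
  by (induction t) auto

lemma shift_sub_cong:
  "(\<And>i. Suc i \<in> X \<Longrightarrow> s i = s' i) \<Longrightarrow> i \<in> X \<Longrightarrow> shift_sub s i = shift_sub s' i"
  by (cases i) auto

lemma substf_cong: "(\<And>i. i \<in> fvf A \<Longrightarrow> s i = s' i) \<Longrightarrow> substf s A = substf s' A"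
proof (induction A arbitrary: s s')
  case (Pr p ts)
  then show ?case by (auto intro!: substt_cong)
next
  case (Conj A B)
  then show ?case by (metis Un_iff fvf.simps(3) substf.simps(3))
next
  case (Disj A B)
  then show ?case by (metis Un_iff fvf.simps(4) substf.simps(4))
next
  case (Impl A B)
  then show ?case by (metis Un_iff fvf.simps(5) substf.simps(5))
next
  case (Forall A)
  have "substf (shift_sub s) A = substf (shift_sub s') A"
    by (rule Forall.IH, rule shift_sub_cong[where X = "fvf A"]) (use Forall.prems in auto)
  then show ?case by simp
next
  case (Exists A)
  have "substf (shift_sub s) A = substf (shift_sub s') A"
    by (rule Exists.IH, rule shift_sub_cong[where X = "fvf A"]) (use Exists.prems in auto)
  then show ?case by simp
qed simp

lemma fvt_substt: "fvt (substt s t) = (\<Union>i\<in>fvt t. fvt (s i))"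
  by (induction t) auto

lemma fvt_lift_trm: "fvt (lift_trm t) = Suc ` fvt t"
  by (auto simp: fvt_substt)

lemma Suc_in_fvt_shift_sub:
  "{j. \<exists>i\<in>X. Suc j \<in> fvt (shift_sub s i)} = (\<Union>i\<in>{j. Suc j \<in> X}. fvt (s i))"
proof (rule set_eqI, rule iffI)
  fix j assume "j \<in> {j. \<exists>i\<in>X. Suc j \<in> fvt (shift_sub s i)}"
  then obtain i where "i \<in> X" "Suc j \<in> fvt (shift_sub s i)" by auto
  then show "j \<in> (\<Union>i\<in>{j. Suc j \<in> X}. fvt (s i))"
    by (cases i) (auto simp: fvt_lift_trm)
next
  fix j assume "j \<in> (\<Union>i\<in>{j. Suc j \<in> X}. fvt (s i))"
  then obtain i where "Suc i \<in> X" "j \<in> fvt (s i)" by auto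
  then show "j \<in> {j. \<exists>i\<in>X. Suc j \<in> fvt (shift_sub s i)}"
    by (auto simp: fvt_lift_trm intro!: bexI[of _ "Suc i"])
qed

lemma fvf_substf: "fvf (substf s A) = (\<Union>i\<in>fvf A. fvt (s i))"
proof (induction A arbitrary: s)
  case (Pr p ts)
  then show ?case by (auto simp: fvt_substt)
qed (simp_all add: Suc_in_fvt_shift_sub UN_Un)

lemma fvf_inst1: "fvf (inst1 A t) \<subseteq> fvf (Forall A) \<union> fvt t"
proof
  fix x assume "x \<in> fvf (inst1 A t)"
  then obtain i where "i \<in> fvf A" "x \<in> fvt (scons t Var i)"
    unfolding inst1_scons fvf_substf by auto
  then show "x \<in> fvf (Forall A) \<union> fvt t" by (cases i) auto
qed

(* True stands for \<forall>, False for \<exists>. *)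
fun quants :: "bool list \<Rightarrow> fm \<Rightarrow> fm" where
  "quants [] B = B"
| "quants (q # qs) B = (if q then Forall (quants qs B) else Exists (quants qs B))"

lemma exs_0 [simp]: "exs 0 A = A"
  and exs_Suc [simp]: "exs (Suc n) A = Exists (exs n A)"
  by (simp_all add: exs_def)

lemma exs_eq_quants: "exs n A = quants (replicate n False) A"
  by (induction n) simp_all

lemma prenex_quants: "prenex A \<Longrightarrow> \<exists>qs B. A = quants qs B \<and> qfree B"
proof (induction rule: prenex.induct)
  case (1 A)
  then show ?case by (intro exI[of _ "[]"]) auto
next
  case (2 A)
  then obtain qs B where "A = quants qs B" "qfree B" by blast
  then show ?case by (intro exI[of _ "True # qs"] exI[of _ B]) simp
next
  case (3 A)
  then obtain qs B where "A = quants qs B" "qfree B" by blast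
  then show ?case by (intro exI[of _ "False # qs"] exI[of _ B]) simp
qed

lemma qfree_substf: "qfree B \<Longrightarrow> qfree (substf s B)"
  by (induction B) auto

lemma substf_quants:
  "substf s (quants qs B) = quants qs (substf ((shift_sub ^^ length qs) s) B)"
  by (induction qs arbitrary: s) (auto simp: funpow_Suc_right simp del: funpow.simps)

lemma shift_sub_funpow:
  "(shift_sub ^^ n) s i = (if i < n then Var i else substt (\<lambda>k. Var (k + n)) (s (i - n)))"
proof (induction n arbitrary: i)
  case 0
  then show ?case by simp
next
  case (Suc n)
  show ?case
  proof (cases i)
    case (Suc j)
    have "lift_trm (substt (\<lambda>k. Var (k + n)) (s (j - n))) = substt (\<lambda>k. Var (k + Suc n)) (s (j - n))"
      by (simp add: substt_substt)
    then show ?thesis using Suc.IH[of j] Suc by simp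
  qed simp
qed

lemma inst_n_0 [simp]: "inst_n 0 B ts = B"
  unfolding inst_n_def by simp

lemma inst_n_Suc:
  "inst_n n (substf ((shift_sub ^^ n) (scons (ts n) Var)) B) ts = inst_n (Suc n) B ts"
  unfolding inst_n_def substf_substf
proof (rule substf_cong)
  fix i
  show "substt (\<lambda>i. if i < n then ts i else Var (i - n)) ((shift_sub ^^ n) (scons (ts n) Var) i) =
         (if i < Suc n then ts i else Var (i - Suc n))"
  proof (cases "i \<le> n")
    case True
    then show ?thesis by (cases "i = n") (auto simp: shift_sub_funpow substt_substt)
  next
    case False
    then obtain j where "i = Suc (n + j)" by (metis add_Suc_right less_imp_Suc_add not_le)
    then show ?thesis by (simp add: shift_sub_funpow)
  qed
qed

lemma inst1_quants:
  "inst1 (quants qs B) t = quants qs (substf ((shift_sub ^^ length qs) (scons t Var)) B)"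
  by (simp add: inst1_scons substf_quants)

abbreviation IQ :: "fm \<Rightarrow> bool" where
  "IQ A \<equiv> deriv {} A"

abbreviation TT :: fm where
  "TT \<equiv> Impl FF FF"

lemma iqc_TT: "IQ TT"
  by (rule deriv.ax_FF)

lemma iqc_imp_refl: "IQ (Impl A A)"
  by (meson deriv.ax_K deriv.ax_S deriv.mp)

lemma iqc_imp_trans: "IQ (Impl A B) \<Longrightarrow> IQ (Impl B C) \<Longrightarrow> IQ (Impl A C)"
  by (meson deriv.ax_K deriv.ax_S deriv.mp)

lemma iqc_DisjE: "IQ (Impl A C) \<Longrightarrow> IQ (Impl B C) \<Longrightarrow> IQ (Impl (Disj A B) C)"
  by (rule deriv.mp[OF deriv.mp[OF deriv.ax_DisjE]])

lemma iqc_Disjs_intro: "A \<in> set As \<Longrightarrow> IQ (Impl A (Disjs As))"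
proof (induction As rule: Disjs.induct)
  case (2 B)
  then show ?case by (simp add: iqc_imp_refl)
next
  case (3 B C As)
  then show ?case by (auto intro: deriv.ax_DisjI1 iqc_imp_trans[OF _ deriv.ax_DisjI2])
qed simp

lemma iqc_Disjs_elim: "(\<And>A. A \<in> set As \<Longrightarrow> IQ (Impl A C)) \<Longrightarrow> IQ (Impl (Disjs As) C)"
  by (induction As rule: Disjs.induct) (simp_all add: deriv.ax_FF iqc_DisjE)

lemma iqc_Disjs_mono:
  "(\<And>A. A \<in> set As \<Longrightarrow> \<exists>B\<in>set Bs. IQ (Impl A B)) \<Longrightarrow> IQ (Impl (Disjs As) (Disjs Bs))"
  by (meson iqc_Disjs_elim iqc_Disjs_intro iqc_imp_trans)

lemma iqc_Exists_mono: "IQ (Impl A B) \<Longrightarrow> IQ (Impl (Exists A) (Exists B))"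
proof -
  assume AB: "IQ (Impl A B)"
  let ?B' = "substf (shift_sub (\<lambda>k. Var (Suc k))) B"
  have "inst1 ?B' (Var 0) = B" by (simp add: inst1_shift_sub scons_Var_0_lift)
  moreover have "liftf (Exists B) = Exists ?B'" by (simp add: liftf_def)
  ultimately have "IQ (Impl B (liftf (Exists B)))" using deriv.ax_ExI[of "{}" ?B' "Var 0"] by simp
  then show ?thesis using AB by (blast intro: deriv.ex_rule iqc_imp_trans)
qed

lemma iqc_inst_n_exs: "IQ (Impl (inst_n n B ts) (exs n B))"
  unfolding exs_eq_quants
proof (induction n arbitrary: B)
  case 0
  then show ?case by (simp add: iqc_imp_refl)
next
  case (Suc n)
  let ?B' = "substf ((shift_sub ^^ n) (scons (ts n) Var)) B"
  have "IQ (Impl (inst_n n ?B' ts) (quants (replicate n False) ?B'))" by (rule Suc.IH)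
  then have "IQ (Impl (inst_n (Suc n) B ts) (inst1 (quants (replicate n False) B) (ts n)))"
    by (simp add: inst1_quants inst_n_Suc)
  then show ?case by (simp add: iqc_imp_trans[OF _ deriv.ax_ExI])
qed

locale intermediate_logic =
  fixes L :: "fm set"
  assumes intermediate: "intermediate L"
begin

lemma iqc_in: "IQ A \<Longrightarrow> A \<in> L"
  using intermediate unfolding intermediate_def IQC_def by auto

lemma mp_in: "Impl A B \<in> L \<Longrightarrow> A \<in> L \<Longrightarrow> B \<in> L"
  using intermediate unfolding intermediate_def by blast

lemma all_rule_in: "Impl (liftf B) A \<in> L \<Longrightarrow> Impl B (Forall A) \<in> L"
  using intermediate unfolding intermediate_def by blast

lemma psubst_in: "A \<in> L \<Longrightarrow> psubst \<sigma> A \<in> L"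
  using intermediate unfolding intermediate_def by blast

lemma iqc_mp_in: "IQ (Impl A B) \<Longrightarrow> A \<in> L \<Longrightarrow> B \<in> L"
  using iqc_in mp_in by blast

lemma Forall_in: "A \<in> L \<Longrightarrow> Forall A \<in> L"
proof -
  assume "A \<in> L"
  then have "Impl (liftf TT) A \<in> L"
    using iqc_mp_in[OF deriv.ax_K[where A = A and B = TT]] by (simp add: liftf_def)
  then have "Impl TT (Forall A) \<in> L" by (rule all_rule_in)
  then show ?thesis using mp_in iqc_in iqc_TT by blast
qed

lemma Foralls_in: "A \<in> L \<Longrightarrow> quants (replicate n True) A \<in> L"
  by (induction n) (auto intro: Forall_in)

lemma inst_n_in: "quants (replicate n True) B \<in> L \<Longrightarrow> inst_n n B ts \<in> L"
proof (induction n arbitrary: B)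
  case (Suc n)
  let ?B' = "substf ((shift_sub ^^ n) (scons (ts n) Var)) B"
  have "inst1 (quants (replicate n True) B) (ts n) \<in> L"
    using Suc.prems by (intro iqc_mp_in[OF deriv.ax_AllE]) simp
  then have "inst_n n ?B' ts \<in> L" using Suc.IH by (simp add: inst1_quants)
  then show ?case by (simp add: inst_n_Suc)
qed simp

lemma substf_in: "A \<in> L \<Longrightarrow> substf s A \<in> L"
proof -
  assume A: "A \<in> L"
  obtain N where N: "\<forall>i\<in>fvf A. i < N"
    using finite_fvf[of A] by (meson finite_nat_set_iff_bounded)
  have "inst_n N A s \<in> L" using A by (intro inst_n_in Foralls_in)
  moreover have "inst_n N A s = substf s A"
    unfolding inst_n_def using N by (intro substf_cong) auto
  ultimately show ?thesis by simp
qed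

lemma provL_in: "provL (prop_fragment L) A \<Longrightarrow> A \<in> L"
  by (induction rule: provL.induct) (auto simp: prop_fragment_def intro: psubst_in mp_in)

end

theorem existential_conservative:
  assumes "intermediate QL1" and "prop_fragment QL1 = prop_fragment QL2"
    and "herbrand_existential QL2" and "existential A" and "A \<in> QL2"
  shows "A \<in> QL1"
proof -
  interpret intermediate_logic QL1 by unfold_locales fact
  from \<open>existential A\<close> obtain n A' where "qfree A'" and A: "A = exs n A'"
    by (auto simp: existential_def)
  then obtain tss where "provL (prop_fragment QL2) (Disjs (map (inst_n n A') tss))"
    using assms(3,5) unfolding herbrand_existential_def by blast
  then have "Disjs (map (inst_n n A') tss) \<in> QL1"
    using provL_in assms(2) by simp
  moreover have "IQ (Impl (Disjs (map (inst_n n A') tss)) A)"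
    by (rule iqc_Disjs_elim) (auto simp: A iqc_inst_n_exs)
  ultimately show ?thesis using iqc_mp_in by blast
qed

section \<open>Herbrand form\<close>

(* Walking through the prefix, c counts the existential quantifiers passed so far (they are
   the bound variables c-1, ..., 0 of the Herbrand form) and p counts all quantifiers passed.
   The universal quantifier at position p becomes the Skolem term with symbol NF + p applied to
   the existential variables preceding it. *)
fun skolem_sub :: "nat \<Rightarrow> bool list \<Rightarrow> (nat \<Rightarrow> trm) \<Rightarrow> nat \<Rightarrow> nat \<Rightarrow> nat \<Rightarrow> trm" where
  "skolem_sub NF [] \<sigma> c p = \<sigma>"
| "skolem_sub NF (q # qs) \<sigma> c p =
     (if q then skolem_sub NF qs (scons (Fun (NF + p) (map Var (rev [0..<c]))) \<sigma>) c (Suc p)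
      else skolem_sub NF qs (shift_sub \<sigma>) (Suc c) (Suc p))"

lemma iqc_skolemize:
  "IQ (Impl (substf \<sigma> (quants qs B)) (exs (count_list qs False) (substf (skolem_sub NF qs \<sigma> c p) B)))"
proof (induction qs arbitrary: \<sigma> c p)
  case Nil
  then show ?case by (simp add: iqc_imp_refl)
next
  case (Cons q qs)
  show ?case
  proof (cases q)
    case True
    let ?t = "Fun (NF + p) (map Var (rev [0..<c]))"
    have "IQ (Impl (substf \<sigma> (quants (q # qs) B)) (substf (scons ?t \<sigma>) (quants qs B)))"
      using True deriv.ax_AllE[of "{}" "substf (shift_sub \<sigma>) (quants qs B)" ?t]
      by (simp add: inst1_shift_sub)
    then show ?thesis using iqc_imp_trans Cons.IH True by simp
  next
    case False
    then show ?thesis using iqc_Exists_mono[OF Cons.IH] by simp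
  qed
qed

section \<open>The CD principle\<close>

context intermediate_logic
begin

lemma CD_rule_in:
  assumes "CD_instances \<subseteq> L" and "Disj B (liftf C) \<in> L"
  shows "Disj (Forall B) C \<in> L"
proof -
  have "Impl (Forall (Disj B (liftf C))) (Disj (Forall B) C) \<in> L"
    using assms(1) unfolding CD_instances_def by blast
  then show ?thesis using assms(2) Forall_in mp_in by blast
qed

lemma Disj_Forall_fresh_in:
  assumes "CD_instances \<subseteq> L" and "Disj (inst1 \<Phi> (Var y)) C \<in> L"
    and "y \<notin> fvf (Forall \<Phi>)" and "y \<notin> fvf C"
  shows "Disj (Forall \<Phi>) C \<in> L"
proof -
  define s where "s = (\<lambda>j. if j = y then Var 0 else Var (Suc j))"
  have "substf s C = liftf C"
    unfolding liftf_def using assms(4) by (intro substf_cong) (auto simp: s_def)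
  moreover have "substf s (inst1 \<Phi> (Var y)) = \<Phi>"
  proof -
    have "substf s (inst1 \<Phi> (Var y)) = substf (\<lambda>i. substt s (scons (Var y) Var i)) \<Phi>"
      by (simp add: inst1_scons substf_substf)
    also have "\<dots> = substf Var \<Phi>"
    proof (rule substf_cong)
      fix i assume "i \<in> fvf \<Phi>"
      then show "substt s (scons (Var y) Var i) = Var i"
        using assms(3) by (cases i) (auto simp: s_def)
    qed
    finally show ?thesis by simp
  qed
  ultimately have "Disj \<Phi> (liftf C) \<in> L"
    using substf_in[OF assms(2), of s] by simp
  then show ?thesis by (rule CD_rule_in[OF assms(1)])
qed

end

fun strip_quant :: "fm \<Rightarrow> fm" where
  "strip_quant (Forall A) = A"
| "strip_quant (Exists A) = A"
| "strip_quant A = A"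

fun inst_path :: "(trm \<Rightarrow> trm) \<Rightarrow> fm \<Rightarrow> trm list \<Rightarrow> fm" where
  "inst_path g \<Phi> [] = \<Phi>"
| "inst_path g \<Phi> (w # ws) = inst_path g (inst1 (strip_quant \<Phi>) (g w)) ws"

lemma inst_path_snoc: "inst_path g \<Phi> (ws @ [w]) = inst1 (strip_quant (inst_path g \<Phi> ws)) (g w)"
  by (induction ws arbitrary: \<Phi>) auto

fun path_sub :: "(trm \<Rightarrow> trm) \<Rightarrow> bool list \<Rightarrow> (nat \<Rightarrow> trm) \<Rightarrow> trm list \<Rightarrow> nat \<Rightarrow> trm" where
  "path_sub g (q # qs) \<sigma> (w # ws) = path_sub g qs (scons (g w) \<sigma>) ws"
| "path_sub g _ \<sigma> _ = \<sigma>"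

lemma strip_quant_substf_quants:
  "strip_quant (substf \<sigma> (quants (q # qs) B)) = substf (shift_sub \<sigma>) (quants qs B)"
  by (cases q) auto

lemma inst_path_quants:
  "length ws \<le> length qs \<Longrightarrow>
   inst_path g (substf \<sigma> (quants qs B)) ws = substf (path_sub g qs \<sigma> ws) (quants (drop (length ws) qs) B)"
proof (induction qs arbitrary: \<sigma> ws)
  case (Cons q qs)
  then show ?case
    by (cases ws) (simp_all add: strip_quant_substf_quants inst1_shift_sub)
qed simp

lemma fvf_inst_path:
  "length ws \<le> length qs \<Longrightarrow>
   fvf (inst_path g (quants qs B) ws) \<subseteq> fvf (quants qs B) \<union> (\<Union>w\<in>set ws. fvt (g w))"
proof (induction qs arbitrary: B ws)
  case (Cons q qs)
  show ?case
  proof (cases ws)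
    case (Cons w ws')
    define B' where "B' = substf ((shift_sub ^^ length qs) (scons (g w) Var)) B"
    have "inst1 (strip_quant (quants (q # qs) B)) (g w) = quants qs B'"
      by (cases q) (simp_all add: B'_def inst1_quants)
    then have path: "inst_path g (quants (q # qs) B) ws = inst_path g (quants qs B') ws'"
      using \<open>ws = w # ws'\<close> by (simp only: inst_path.simps)
    have head: "fvf (quants qs B') \<subseteq> fvf (quants (q # qs) B) \<union> fvt (g w)"
      using fvf_inst1[of "quants qs B" "g w"] by (cases q) (simp_all add: B'_def inst1_quants)
    have "fvf (inst_path g (quants qs B') ws') \<subseteq> fvf (quants qs B') \<union> (\<Union>w\<in>set ws'. fvt (g w))"
      using Cons.IH Cons.prems \<open>ws = w # ws'\<close> by simp
    also have "\<dots> \<subseteq> (fvf (quants (q # qs) B) \<union> fvt (g w)) \<union> (\<Union>w\<in>set ws'. fvt (g w))"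
      by (rule Un_mono[OF head order_refl])
    also have "\<dots> = fvf (quants (q # qs) B) \<union> (\<Union>w\<in>set ws. fvt (g w))"
      using \<open>ws = w # ws'\<close> by (simp only: list.set UN_insert Un_assoc)
    finally show ?thesis unfolding path .
  qed simp
qed simp

section \<open>Replacing Skolem terms by variables\<close>

instance trm :: countable
  by countable_datatype

fun funs_trm :: "trm \<Rightarrow> nat set" where
  "funs_trm (Var j) = {}"
| "funs_trm (Fun f ts) = insert f (\<Union>t\<in>set ts. funs_trm t)"

fun funs_fm :: "fm \<Rightarrow> nat set" where
  "funs_fm FF = {}"
| "funs_fm (Pr p ts) = (\<Union>t\<in>set ts. funs_trm t)"
| "funs_fm (Conj A B) = funs_fm A \<union> funs_fm B"
| "funs_fm (Disj A B) = funs_fm A \<union> funs_fm B"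
| "funs_fm (Impl A B) = funs_fm A \<union> funs_fm B"
| "funs_fm (Forall A) = funs_fm A"
| "funs_fm (Exists A) = funs_fm A"

lemma finite_funs_trm: "finite (funs_trm t)"
  by (induction t) auto

lemma finite_funs_fm: "finite (funs_fm A)"
  by (induction A) (auto simp: finite_funs_trm)

(* Function symbols NF, NF+1, ... are the Skolem functions; every term headed by one of them
   becomes a variable of its own, numbered from N upwards. *)
fun unskolem :: "nat \<Rightarrow> nat \<Rightarrow> trm \<Rightarrow> trm" where
  "unskolem NF N (Var j) = Var j"
| "unskolem NF N (Fun f ts) =
     (if NF \<le> f then Var (N + to_nat (Fun f ts)) else Fun f (map (unskolem NF N) ts))"

lemma unskolem_substt:
  "\<forall>f\<in>funs_trm t. f < NF \<Longrightarrow> unskolem NF N (substt s t) = substt (\<lambda>i. unskolem NF N (s i)) t"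
  by (induction t) auto

lemma size_less_Fun: "t \<in> set ts \<Longrightarrow> size t < size (Fun f ts)"
  by (simp add: less_Suc_eq_le size_list_estimation')

lemma fvt_unskolem:
  "y \<in> fvt (unskolem NF N w) \<Longrightarrow> y \<in> fvt w \<or> (\<exists>u::trm. y = N + to_nat u \<and> size u \<le> size w)"
proof (induction w)
  case (Fun f ts)
  show ?case
  proof (cases "NF \<le> f")
    case False
    then obtain t where t: "t \<in> set ts" "y \<in> fvt (unskolem NF N t)" using Fun.prems by auto
    then show ?thesis
      using Fun.IH size_less_Fun[OF t(1), of f] by fastforce
  next
    case True
    then have "y = N + to_nat (Fun f ts)" using Fun.prems by simp
    then show ?thesis by (metis order_refl)
  qed
qed simp

fun map_trms :: "(trm \<Rightarrow> trm) \<Rightarrow> fm \<Rightarrow> fm" where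
  "map_trms g FF = FF"
| "map_trms g (Pr p ts) = Pr p (map g ts)"
| "map_trms g (Conj A B) = Conj (map_trms g A) (map_trms g B)"
| "map_trms g (Disj A B) = Disj (map_trms g A) (map_trms g B)"
| "map_trms g (Impl A B) = Impl (map_trms g A) (map_trms g B)"
| "map_trms g (Forall A) = Forall (map_trms g A)"
| "map_trms g (Exists A) = Exists (map_trms g A)"

lemma qfree_map_trms [simp]: "qfree (map_trms g A) = qfree A"
  by (induction A) auto

lemma map_trms_unskolem_substf:
  "qfree B \<Longrightarrow> \<forall>f\<in>funs_fm B. f < NF \<Longrightarrow>
   map_trms (unskolem NF N) (substf s B) = substf (\<lambda>i. unskolem NF N (s i)) B"
  by (induction B) (auto simp: unskolem_substt)

lemma map_trms_Disjs: "map_trms g (Disjs As) = Disjs (map (map_trms g) As)"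
  by (induction As rule: Disjs.induct) auto

lemma map_trms_psubst:
  "propositional A \<Longrightarrow> map_trms g (psubst \<sigma> A) = psubst (\<lambda>p n. map_trms g (\<sigma> p n)) A"
  unfolding psubst_def by (induction A) auto

lemma provL_map_trms:
  "provL P A \<Longrightarrow> \<forall>C\<in>P. propositional C \<Longrightarrow> provL P (map_trms g A)"
proof (induction rule: provL.induct)
  case (inst A \<sigma>)
  then have "provL P (psubst (\<lambda>p n. map_trms g (\<sigma> p n)) A)"
    by (intro provL.inst) auto
  then show ?case using inst by (simp add: map_trms_psubst)
next
  case (mpL A B)
  then show ?case using provL.mpL[of P "map_trms g A" "map_trms g B"] by simp
qed

definition exs_before :: "bool list \<Rightarrow> nat \<Rightarrow> nat" where
  "exs_before qs i = count_list (take i qs) False"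

lemma exs_before_Suc:
  "i < length qs \<Longrightarrow>
   exs_before qs (Suc i) = (if qs ! i then exs_before qs i else Suc (exs_before qs i))"
  unfolding exs_before_def by (simp add: take_Suc_conv_app_nth)

lemma exs_before_mono: "i \<le> j \<Longrightarrow> exs_before qs i \<le> exs_before qs j"
proof -
  assume "i \<le> j"
  then have "take j qs = take i qs @ take (j - i) (drop i qs)"
    by (metis le_add_diff_inverse take_add)
  then show ?thesis unfolding exs_before_def by simp
qed

lemma exs_before_less:
  "i < j \<Longrightarrow> j \<le> length qs \<Longrightarrow> \<not> qs ! i \<Longrightarrow> exs_before qs i < exs_before qs j"
  using exs_before_Suc[of i qs] exs_before_mono[of "Suc i" j qs] by simp

lemma exs_before_length: "exs_before qs (length qs) = count_list qs False"
  by (simp add: exs_before_def)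

(* The terms instantiating the prefix qs in the Herbrand instance with existential witnesses Es:
   a universal position i receives its Skolem term applied to the witnesses before it.
   The offsets c and p play the same role as in skolem_sub. *)
definition herbrand_path :: "nat \<Rightarrow> bool list \<Rightarrow> trm list \<Rightarrow> nat \<Rightarrow> nat \<Rightarrow> trm list" where
  "herbrand_path NF qs Es c p =
     map (\<lambda>i. if qs ! i then Fun (NF + (p + i)) (take (c + exs_before qs i) Es)
              else Es ! (c + exs_before qs i))
       [0..<length qs]"

lemma length_herbrand_path [simp]: "length (herbrand_path NF qs Es c p) = length qs"
  by (simp add: herbrand_path_def)

lemma herbrand_path_Cons:
  "herbrand_path NF (q # qs) Es c p =
     (if q then Fun (NF + p) (take c Es) # herbrand_path NF qs Es c (Suc p)
      else Es ! c # herbrand_path NF qs Es (Suc c) (Suc p))"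
  unfolding herbrand_path_def by (simp only: length_Cons map_upt_Suc) (simp add: exs_before_def)

(* The bound variables c-1, ..., 0 of the Herbrand matrix stand for Es ! 0, ..., Es ! (c-1). *)
definition witness_sub :: "trm list \<Rightarrow> nat \<Rightarrow> nat \<Rightarrow> trm" where
  "witness_sub Es c i = (if i < c then Es ! (c - 1 - i) else Var (i - c))"

lemma map_witness_sub_rev_upt:
  "c \<le> length Es \<Longrightarrow> map (witness_sub Es c) (rev [0..<c]) = take c Es"
  by (rule nth_equalityI) (auto simp: witness_sub_def rev_nth)

lemma witness_sub_Suc: "(\<lambda>k. witness_sub Es (Suc c) (Suc k)) = witness_sub Es c"
  by (auto simp: witness_sub_def fun_eq_iff)

lemma path_sub_herbrand_path:
  "c + count_list qs False = length Es \<Longrightarrow> (\<And>i. \<sigma>' i = g (substt (witness_sub Es c) (\<sigma> i))) \<Longrightarrow>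
   path_sub g qs \<sigma>' (herbrand_path NF qs Es c p) =
     (\<lambda>i. g (substt (witness_sub Es (length Es)) (skolem_sub NF qs \<sigma> c p i)))"
proof (induction qs arbitrary: \<sigma> \<sigma>' c p)
  case Nil
  then show ?case by (auto simp: fun_eq_iff)
next
  case (Cons q qs)
  show ?case
  proof (cases q)
    case True
    let ?sk = "Fun (NF + p) (map Var (rev [0..<c]))"
    have "substt (witness_sub Es c) ?sk = Fun (NF + p) (take c Es)"
      using map_witness_sub_rev_upt[of c Es] Cons.prems(1) by (simp add: comp_def)
    then have "path_sub g qs (scons (g (Fun (NF + p) (take c Es))) \<sigma>') (herbrand_path NF qs Es c (Suc p)) =
        (\<lambda>i. g (substt (witness_sub Es (length Es)) (skolem_sub NF qs (scons ?sk \<sigma>) c (Suc p) i)))"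
      using Cons.prems True by (intro Cons.IH) (auto simp: scons_def split: nat.split)
    then show ?thesis using True by (simp add: herbrand_path_Cons)
  next
    case False
    have "scons (g (Es ! c)) \<sigma>' i = g (substt (witness_sub Es (Suc c)) (shift_sub \<sigma> i))" for i
      using Cons.prems(2) by (cases i) (simp add: witness_sub_def, simp add: substt_substt witness_sub_Suc)
    then have "path_sub g qs (scons (g (Es ! c)) \<sigma>') (herbrand_path NF qs Es (Suc c) (Suc p)) =
        (\<lambda>i. g (substt (witness_sub Es (length Es)) (skolem_sub NF qs (shift_sub \<sigma>) (Suc c) (Suc p) i)))"
      using Cons.prems(1) False by (intro Cons.IH) auto
    then show ?thesis using False by (simp add: herbrand_path_Cons)
  qed
qed

lemma unskolem_herbrand_instance:
  fixes qs :: "bool list" and ts :: "nat \<Rightarrow> trm"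
  assumes "qfree B" and "\<forall>f\<in>funs_fm B. f < NF"
  defines "n \<equiv> count_list qs False"
  shows "map_trms (unskolem NF N) (inst_n n (substf (skolem_sub NF qs Var 0 0) B) ts)
       = inst_path (unskolem NF N) (quants qs B) (herbrand_path NF qs (rev (map ts [0..<n])) 0 0)"
proof -
  define Es where "Es = rev (map ts [0..<n])"
  define \<sigma> where "\<sigma> = (\<lambda>i. substt (witness_sub Es (length Es)) (skolem_sub NF qs Var 0 0 i))"
  have "(\<lambda>i. if i < n then ts i else Var (i - n)) = witness_sub Es (length Es)"
    by (auto simp: fun_eq_iff Es_def witness_sub_def rev_nth)
  then have "map_trms (unskolem NF N) (inst_n n (substf (skolem_sub NF qs Var 0 0) B) ts)
      = map_trms (unskolem NF N) (substf \<sigma> B)"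
    by (simp add: inst_n_def substf_substf \<sigma>_def)
  also have "\<dots> = substf (\<lambda>i. unskolem NF N (\<sigma> i)) B"
    by (rule map_trms_unskolem_substf[OF assms(1,2)])
  also have "(\<lambda>i. unskolem NF N (\<sigma> i)) = path_sub (unskolem NF N) qs Var (herbrand_path NF qs Es 0 0)"
    unfolding \<sigma>_def
    by (rule path_sub_herbrand_path[symmetric]) (auto simp: Es_def n_def witness_sub_def)
  also have "substf (path_sub (unskolem NF N) qs Var (herbrand_path NF qs Es 0 0)) B
      = inst_path (unskolem NF N) (quants qs B) (herbrand_path NF qs Es 0 0)"
    using inst_path_quants[of "herbrand_path NF qs Es 0 0" qs "unskolem NF N" Var B] by simp
  finally show ?thesis unfolding Es_def .
qed

lemma size_list_take_mono: "a \<le> b \<Longrightarrow> size_list f (take a xs) \<le> size_list f (take b xs)"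
proof -
  assume "a \<le> b"
  then have "take b xs = take a xs @ take (b - a) (drop a xs)"
    by (metis le_add_diff_inverse take_add)
  then show ?thesis by simp
qed

section \<open>Restoring the quantifiers of a prenex formula\<close>

(* Ess holds the witness lists of the disjuncts of a Herbrand disjunction for quants qs B.
   All variables in sight are below N, so the variables introduced by unskolem are fresh. *)
locale herbrand_disjunction = intermediate_logic +
  fixes qs :: "bool list" and B :: fm and NF N :: nat and Ess :: "trm list list"
  assumes CD: "CD_instances \<subseteq> L"
    and length_Ess: "\<forall>Es\<in>set Ess. length Es = count_list qs False"
    and fvf_below: "\<forall>i\<in>fvf (quants qs B). i < N"
    and fvt_Ess_below: "\<forall>Es\<in>set Ess. \<forall>e\<in>set Es. \<forall>i\<in>fvt e. i < N"
begin

abbreviation unsk :: "trm \<Rightarrow> trm" where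
  "unsk \<equiv> unskolem NF N"

definition path :: "nat \<Rightarrow> trm list" where
  "path j = herbrand_path NF qs (Ess ! j) 0 0"

definition partial_inst :: "(nat \<Rightarrow> nat) \<Rightarrow> nat \<Rightarrow> fm" where
  "partial_inst ks j = inst_path unsk (quants qs B) (take (ks j) (path j))"

definition disjunction :: "(nat \<Rightarrow> nat) \<Rightarrow> fm" where
  "disjunction ks = Disjs (map (partial_inst ks) [0..<length Ess])"

(* Paths through the same universal node are cut on the same side of it. *)
definition coherent :: "(nat \<Rightarrow> nat) \<Rightarrow> bool" where
  "coherent ks \<longleftrightarrow>
     (\<forall>a<length Ess. \<forall>b<length Ess. \<forall>p<length qs. qs ! p \<longrightarrow>
        take (Suc p) (path a) = take (Suc p) (path b) \<longrightarrow> ks a \<le> p \<longrightarrow> ks b \<le> p)"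

definition admissible :: "(nat \<Rightarrow> nat) \<Rightarrow> bool" where
  "admissible ks \<longleftrightarrow> (\<forall>j<length Ess. ks j \<le> length qs) \<and> coherent ks"

(* Orders the cut points lexicographically: size of the last instantiated term, then position. *)
definition weight :: "(nat \<Rightarrow> nat) \<Rightarrow> nat \<Rightarrow> nat" where
  "weight ks j = size (path j ! (ks j - 1)) * Suc (length qs) + (ks j - 1)"

lemma length_path [simp]: "length (path j) = length qs"
  by (simp add: path_def)

lemma path_nth:
  "i < length qs \<Longrightarrow>
   path j ! i = (if qs ! i then Fun (NF + i) (take (exs_before qs i) (Ess ! j))
                 else Ess ! j ! exs_before qs i)"
  by (simp add: path_def herbrand_path_def)

lemma exs_before_less_length_Ess:
  "j < length Ess \<Longrightarrow> i < length qs \<Longrightarrow> \<not> qs ! i \<Longrightarrow> exs_before qs i < length (Ess ! j)"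
  using exs_before_less[of i "length qs" qs] exs_before_length[of qs] length_Ess by simp

lemma inst_path_take:
  "k \<le> length qs \<Longrightarrow>
   inst_path unsk (quants qs B) (take k (path j)) =
     substf (path_sub unsk qs Var (take k (path j))) (quants (drop k qs) B)"
  using inst_path_quants[of "take k (path j)" qs unsk Var B] by simp

lemma inst_path_take_Forall:
  "p < length qs \<Longrightarrow> qs ! p \<Longrightarrow>
   inst_path unsk (quants qs B) (take p (path j)) =
     Forall (strip_quant (inst_path unsk (quants qs B) (take p (path j))))"
  using inst_path_take[of p j] by (simp add: Cons_nth_drop_Suc[symmetric])

lemma inst_path_take_Exists:
  "p < length qs \<Longrightarrow> \<not> qs ! p \<Longrightarrow>
   inst_path unsk (quants qs B) (take p (path j)) =
     Exists (strip_quant (inst_path unsk (quants qs B) (take p (path j))))"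
  using inst_path_take[of p j] by (simp add: Cons_nth_drop_Suc[symmetric])

lemma inst_path_take_Suc:
  "p < length qs \<Longrightarrow>
   inst_path unsk (quants qs B) (take (Suc p) (path j)) =
     inst1 (strip_quant (inst_path unsk (quants qs B) (take p (path j)))) (unsk (path j ! p))"
  by (simp add: take_Suc_conv_app_nth inst_path_snoc)

lemma large_var_in_inst_path_take:
  assumes "N \<le> y" and "k \<le> length qs"
    and "y \<in> fvf (inst_path unsk (quants qs B) (take k (path j)))"
  shows "\<exists>i<k. y \<in> fvt (unsk (path j ! i))"
proof -
  have "y \<in> fvf (quants qs B) \<union> (\<Union>w\<in>set (take k (path j)). fvt (unsk w))"
    using fvf_inst_path[of "take k (path j)" qs unsk B] assms(2,3) by auto
  moreover have "y \<notin> fvf (quants qs B)" using fvf_below assms(1) by force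
  ultimately obtain w where "w \<in> set (take k (path j))" "y \<in> fvt (unsk w)" by blast
  then show ?thesis by (auto simp: in_set_conv_nth)
qed

lemma fvt_unsk_universal:
  "i < length qs \<Longrightarrow> qs ! i \<Longrightarrow> fvt (unsk (path j ! i)) = {N + to_nat (path j ! i)}"
  by (simp add: path_nth)

lemma fvt_unsk_existential:
  assumes "j < length Ess" "i < length qs" "\<not> qs ! i" "N \<le> y" "y \<in> fvt (unsk (path j ! i))"
  shows "\<exists>u::trm. y = N + to_nat u \<and> size u \<le> size (path j ! i)"
proof -
  have "path j ! i \<in> set (Ess ! j)"
    using assms(1-3) exs_before_less_length_Ess by (simp add: path_nth)
  then have "y \<notin> fvt (path j ! i)"
    using fvt_Ess_below nth_mem[OF assms(1)] assms(4) by fastforce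
  then show ?thesis using fvt_unskolem[OF assms(5)] by blast
qed

lemma take_path_eq_if_universal_node_eq:
  assumes p: "p < length qs" "qs ! p" and eq: "path j' ! p = path j ! p"
  shows "take (Suc p) (path j') = take (Suc p) (path j)"
proof -
  have prefix: "take (exs_before qs p) (Ess ! j') = take (exs_before qs p) (Ess ! j)"
    using eq p by (simp add: path_nth)
  have "path j' ! i = path j ! i" if i: "i \<le> p" for i
  proof (cases "qs ! i")
    case True
    have "exs_before qs i \<le> exs_before qs p" using i by (rule exs_before_mono)
    then have "take (exs_before qs i) (Ess ! j') = take (exs_before qs i) (Ess ! j)"
      using prefix by (metis min.absorb1 take_take)
    then show ?thesis using True i p by (simp add: path_nth)
  next
    case False
    then have "i < p" using i p by (metis le_neq_implies_less)
    then have "exs_before qs i < exs_before qs p" using exs_before_less False p by simp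
    then have "Ess ! j' ! exs_before qs i = Ess ! j ! exs_before qs i"
      using prefix by (metis nth_take)
    then show ?thesis using False i p by (simp add: path_nth)
  qed
  then show ?thesis using p by (intro nth_equalityI) auto
qed

lemma size_universal_node_mono:
  assumes "p \<le> p'" "p' < length qs" "qs ! p" "qs ! p'"
    and "take (Suc p) (path j') = take (Suc p) (path j)"
  shows "size (path j ! p) \<le> size (path j' ! p')"
proof -
  have "path j ! p = path j' ! p" using assms(5) by (metis lessI nth_take)
  moreover have "exs_before qs p \<le> exs_before qs p'" using assms(1) by (rule exs_before_mono)
  ultimately show ?thesis using assms(1-4) size_list_take_mono by (simp add: path_nth)
qed

lemma size_existential_node_less:
  assumes "j < length Ess" "i < p'" "p' < length qs" "\<not> qs ! i" "qs ! p'"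
  shows "size (path j ! i) < size (path j ! p')"
proof -
  have "exs_before qs i < exs_before qs p'" using exs_before_less assms(2-4) by simp
  moreover have "exs_before qs i < length (Ess ! j)"
    using exs_before_less_length_Ess assms by simp
  ultimately have "Ess ! j ! exs_before qs i \<in> set (take (exs_before qs p') (Ess ! j))"
    by (metis in_set_conv_nth length_take min_less_iff_conj nth_take)
  then show ?thesis using assms(2-5) size_less_Fun by (simp add: path_nth)
qed

lemma exists_step:
  assumes adm: "admissible ks" and j: "j < length Ess" and ks_j: "ks j = Suc p"
    and ex: "\<not> qs ! p" and D: "disjunction ks \<in> L"
  shows "admissible (ks(j := p)) \<and> disjunction (ks(j := p)) \<in> L"
proof
  have p: "p < length qs" using adm j ks_j by (auto simp: admissible_def)
  let ?\<Phi> = "strip_quant (inst_path unsk (quants qs B) (take p (path j)))"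
  have "partial_inst ks j = inst1 ?\<Phi> (unsk (path j ! p))"
    using inst_path_take_Suc[OF p] by (simp add: partial_inst_def ks_j)
  moreover have "partial_inst (ks(j := p)) j = Exists ?\<Phi>"
    using inst_path_take_Exists[OF p ex] by (simp add: partial_inst_def)
  ultimately have "IQ (Impl (partial_inst ks j) (partial_inst (ks(j := p)) j))"
    using deriv.ax_ExI by simp
  then have "IQ (Impl (disjunction ks) (disjunction (ks(j := p))))"
    unfolding disjunction_def
    by (intro iqc_Disjs_mono) (force simp: partial_inst_def iqc_imp_refl)
  then show "disjunction (ks(j := p)) \<in> L" using D iqc_mp_in by blast
  have "coherent (ks(j := p))"
    unfolding coherent_def
  proof (intro allI impI)
    fix a b p0 assume a: "a < length Ess" and b: "b < length Ess" and p0: "p0 < length qs"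
      and q0: "qs ! p0" and tk: "take (Suc p0) (path a) = take (Suc p0) (path b)"
      and ka: "(ks(j := p)) a \<le> p0"
    have "ks a \<le> p0"
      using ka q0 ex ks_j by (cases "a = j") (auto simp: le_eq_less_or_eq)
    then have "ks b \<le> p0" using adm a b p0 q0 tk unfolding admissible_def coherent_def by blast
    then show "(ks(j := p)) b \<le> p0" using ks_j by auto
  qed
  then show "admissible (ks(j := p))" using adm p by (auto simp: admissible_def)
qed

end

(* The universal quantifier at position p is restored on all paths through the node
   path j ! p, which carries the largest weight among the current cut points. *)
locale universal_step = herbrand_disjunction +
  fixes ks :: "nat \<Rightarrow> nat" and j p :: nat
  assumes ks_admissible: "admissible ks" and j: "j < length Ess" and ks_j: "ks j = Suc p"
    and universal: "\<forall>j'<length Ess. 0 < ks j' \<longrightarrow> qs ! (ks j' - 1)"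
    and weight_max: "\<forall>j'<length Ess. 0 < ks j' \<longrightarrow> weight ks j' \<le> weight ks j"
begin

abbreviation fresh :: nat where
  "fresh \<equiv> N + to_nat (path j ! p)"

abbreviation branch :: "nat set" where
  "branch \<equiv> {j'. j' < length Ess \<and> take (Suc p) (path j') = take (Suc p) (path j)}"

abbreviation matrix :: fm where
  "matrix \<equiv> strip_quant (inst_path unsk (quants qs B) (take p (path j)))"

abbreviation lowered :: "nat \<Rightarrow> nat" where
  "lowered \<equiv> (\<lambda>j'. if j' \<in> branch then p else ks j')"

lemma ks_le: "j' < length Ess \<Longrightarrow> ks j' \<le> length qs"
  using ks_admissible by (simp add: admissible_def)

lemma p_less: "p < length qs"
  using ks_le[OF j] ks_j by simp

lemma qs_p: "qs ! p"
  using universal j ks_j by force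

lemma last_node_not_larger:
  assumes j': "j' < length Ess" "0 < ks j'"
    and le: "size (path j ! p) \<le> size (path j' ! (ks j' - 1))"
  shows "size (path j' ! (ks j' - 1)) = size (path j ! p) \<and> ks j' - 1 \<le> p"
proof -
  let ?s = "size (path j ! p)" and ?s' = "size (path j' ! (ks j' - 1))"
  have w: "?s' * Suc (length qs) + (ks j' - 1) \<le> ?s * Suc (length qs) + p"
    using weight_max j' by (force simp: weight_def ks_j)
  have "\<not> Suc ?s \<le> ?s'"
  proof
    assume "Suc ?s \<le> ?s'"
    then have "Suc ?s * Suc (length qs) \<le> ?s' * Suc (length qs)" by (rule mult_right_mono) simp
    then show False using w p_less by simp
  qed
  then have "?s' = ?s" using le by simp
  then show ?thesis using w by simp
qed

lemma branch_depth: "j' \<in> branch \<Longrightarrow> ks j' = Suc p"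
proof (rule ccontr)
  assume "j' \<in> branch" and ne: "ks j' \<noteq> Suc p"
  then have j': "j' < length Ess" and tk: "take (Suc p) (path j') = take (Suc p) (path j)" by auto
  show False
  proof (cases "ks j' \<le> p")
    case True
    then have "ks j \<le> p"
      using ks_admissible j' j p_less qs_p tk unfolding admissible_def coherent_def by blast
    then show False using ks_j by simp
  next
    case False
    then have p': "p < ks j' - 1" "0 < ks j'" using ne by auto
    moreover have "qs ! (ks j' - 1)" using universal j' p' by blast
    moreover have "ks j' - 1 < length qs" using ks_le[OF j'] p' by simp
    ultimately have "size (path j ! p) \<le> size (path j' ! (ks j' - 1))"
      using size_universal_node_mono[OF _ _ qs_p _ tk] by simp
    then have "ks j' - 1 \<le> p" using last_node_not_larger[OF j' p'(2)] by blast
    then show False using p'(1) by simp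
  qed
qed

lemma fresh_occurrence:
  assumes j': "j' < length Ess" and i: "i < ks j'" and occ: "fresh \<in> fvt (unsk (path j' ! i))"
  shows "i = p \<and> j' \<in> branch"
proof -
  have i_len: "i < length qs" using ks_le[OF j'] i by simp
  show ?thesis
  proof (cases "qs ! i")
    case True
    then have eq: "path j' ! i = path j ! p"
      using occ fvt_unsk_universal[OF i_len True] by simp
    then have "i = p" using i_len True p_less qs_p by (simp add: path_nth)
    moreover from this have "take (Suc p) (path j') = take (Suc p) (path j)"
      using eq by (intro take_path_eq_if_universal_node_eq[OF p_less qs_p]) simp
    ultimately show ?thesis using j' by simp
  next
    case False
    obtain u :: trm where "fresh = N + to_nat u" and "size u \<le> size (path j' ! i)"
      using fvt_unsk_existential[OF j' i_len False _ occ] by auto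
    then have size_node: "size (path j ! p) \<le> size (path j' ! i)" by simp
    have pos: "0 < ks j'" using i by simp
    then have last: "qs ! (ks j' - 1)" using universal j' by blast
    have "i \<noteq> ks j' - 1" using last False by metis
    then have "i < ks j' - 1" using i by simp
    moreover have "ks j' - 1 < length qs" using ks_le[OF j'] pos by simp
    ultimately have "size (path j' ! i) < size (path j' ! (ks j' - 1))"
      by (rule size_existential_node_less[OF j' _ _ False last])
    with size_node have "size (path j ! p) \<le> size (path j' ! (ks j' - 1))"
      and "size (path j' ! (ks j' - 1)) \<noteq> size (path j ! p)" by simp_all
    then show ?thesis using last_node_not_larger[OF j' pos] by blast
  qed
qed

lemma fresh_not_in_other_disjuncts:
  assumes "j' < length Ess" and "j' \<notin> branch"
  shows "fresh \<notin> fvf (partial_inst ks j')"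
proof
  assume "fresh \<in> fvf (partial_inst ks j')"
  then obtain i where "i < ks j'" "fresh \<in> fvt (unsk (path j' ! i))"
    using large_var_in_inst_path_take[of fresh "ks j'" j'] ks_le[OF assms(1)]
    by (auto simp: partial_inst_def)
  then show False using fresh_occurrence assms by blast
qed

lemma matrix_Forall: "inst_path unsk (quants qs B) (take p (path j)) = Forall matrix"
  using inst_path_take_Forall[OF p_less qs_p] .

lemma fresh_not_in_Forall_matrix: "fresh \<notin> fvf (Forall matrix)"
proof
  assume "fresh \<in> fvf (Forall matrix)"
  then have "fresh \<in> fvf (inst_path unsk (quants qs B) (take p (path j)))"
    by (subst matrix_Forall)
  then obtain i where "i < p" "fresh \<in> fvt (unsk (path j ! i))"
    using large_var_in_inst_path_take[of fresh p j] p_less by auto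
  moreover have "i < ks j" using \<open>i < p\<close> ks_j by simp
  ultimately have "i = p" using fresh_occurrence[OF j] by blast
  then show False using \<open>i < p\<close> by simp
qed

lemma partial_inst_branch: "j' \<in> branch \<Longrightarrow> partial_inst ks j' = inst1 matrix (Var fresh)"
  using branch_depth inst_path_take_Suc[OF p_less, of j] p_less qs_p
  by (simp add: partial_inst_def path_nth)

lemma partial_inst_lowered_branch: "j' \<in> branch \<Longrightarrow> partial_inst lowered j' = Forall matrix"
proof -
  assume "j' \<in> branch"
  then have "take p (take (Suc p) (path j')) = take p (take (Suc p) (path j))" by simp
  then have "take p (path j') = take p (path j)" by simp
  then have "partial_inst lowered j' = inst_path unsk (quants qs B) (take p (path j))"
    using \<open>j' \<in> branch\<close> by (simp add: partial_inst_def)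
  then show ?thesis using matrix_Forall by (rule trans)
qed

lemma disjunction_lowered_in:
  assumes "disjunction ks \<in> L"
  shows "disjunction lowered \<in> L"
proof -
  define R where "R = map (partial_inst ks) (filter (\<lambda>j'. j' \<notin> branch) [0..<length Ess])"
  have "IQ (Impl (disjunction ks) (Disj (inst1 matrix (Var fresh)) (Disjs R)))"
    unfolding disjunction_def
  proof (rule iqc_Disjs_elim)
    fix A assume "A \<in> set (map (partial_inst ks) [0..<length Ess])"
    then obtain j' where j': "j' < length Ess" "A = partial_inst ks j'" by auto
    show "IQ (Impl A (Disj (inst1 matrix (Var fresh)) (Disjs R)))"
    proof (cases "j' \<in> branch")
      case True
      then show ?thesis using j' partial_inst_branch by (simp add: deriv.ax_DisjI1)
    next
      case False
      then have "A \<in> set R" using j' by (simp add: R_def)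
      then show ?thesis using iqc_imp_trans[OF iqc_Disjs_intro deriv.ax_DisjI2] by blast
    qed
  qed
  moreover have "fresh \<notin> fvf (Disjs R)"
    using fvf_Disjs fresh_not_in_other_disjuncts by (fastforce simp: R_def)
  ultimately have "Disj (Forall matrix) (Disjs R) \<in> L"
    using Disj_Forall_fresh_in[OF CD _ fresh_not_in_Forall_matrix] iqc_mp_in assms by blast
  moreover have "IQ (Impl (Disj (Forall matrix) (Disjs R)) (disjunction lowered))"
    unfolding disjunction_def
  proof (rule iqc_DisjE)
    show "IQ (Impl (Forall matrix) (Disjs (map (partial_inst lowered) [0..<length Ess])))"
      using iqc_Disjs_intro partial_inst_lowered_branch[of j] j by force
    show "IQ (Impl (Disjs R) (Disjs (map (partial_inst lowered) [0..<length Ess])))"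
      by (rule iqc_Disjs_mono) (force simp: R_def partial_inst_def iqc_imp_refl)
  qed
  ultimately show ?thesis using iqc_mp_in by blast
qed

lemma sum_lowered_less: "(\<Sum>j'<length Ess. lowered j') < (\<Sum>j'<length Ess. ks j')"
proof (rule sum_strict_mono_ex1)
  show "\<forall>j'\<in>{..<length Ess}. lowered j' \<le> ks j'" using branch_depth by simp
  show "\<exists>j'\<in>{..<length Ess}. lowered j' < ks j'" using j ks_j by force
qed simp

lemma admissible_lowered: "admissible lowered"
proof -
  have "coherent lowered"
    unfolding coherent_def
  proof (intro allI impI)
    fix a b p0 assume a: "a < length Ess" and b: "b < length Ess" and p0: "p0 < length qs"
      and q0: "qs ! p0" and tk: "take (Suc p0) (path a) = take (Suc p0) (path b)"
      and ka: "lowered a \<le> p0"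
    have coh: "ks a \<le> p0 \<Longrightarrow> ks b \<le> p0"
      using ks_admissible a b p0 q0 tk unfolding admissible_def coherent_def by blast
    show "lowered b \<le> p0"
    proof (cases "a \<in> branch \<and> p0 = p")
      case True
      then have "b \<in> branch" using tk b by simp
      then show ?thesis using True by simp
    next
      case False
      then have "ks a \<le> p0" using ka branch_depth[of a] by (auto split: if_splits)
      then show ?thesis using coh branch_depth[of b] by auto
    qed
  qed
  moreover have "\<forall>j'<length Ess. lowered j' \<le> length qs" using ks_le p_less by simp
  ultimately show ?thesis by (simp add: admissible_def)
qed

end

context herbrand_disjunction
begin

lemma universal_step_applies:
  assumes "admissible ks" and "disjunction ks \<in> L" and "\<exists>j<length Ess. 0 < ks j"
    and universal: "\<forall>j<length Ess. 0 < ks j \<longrightarrow> qs ! (ks j - 1)"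
  obtains ks' where "(\<Sum>i<length Ess. ks' i) < (\<Sum>i<length Ess. ks i)"
    and "admissible ks'" and "disjunction ks' \<in> L"
proof -
  define S where "S = {j. j < length Ess \<and> 0 < ks j}"
  have fin: "finite (weight ks ` S)" and ne: "weight ks ` S \<noteq> {}"
    using assms(3) by (auto simp: S_def)
  obtain j where "j \<in> S" and "weight ks j = Max (weight ks ` S)"
    using Max_in[OF fin ne] by auto
  then have j: "j < length Ess" "0 < ks j"
    and max: "\<forall>j'<length Ess. 0 < ks j' \<longrightarrow> weight ks j' \<le> weight ks j"
    using Max_ge[OF fin] by (auto simp: S_def)
  then obtain p where "ks j = Suc p" using gr0_implies_Suc by blast
  interpret universal_step L qs B NF N Ess ks j p
    using herbrand_disjunction_axioms assms(1) j universal max \<open>ks j = Suc p\<close>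
    by (simp add: universal_step_def universal_step_axioms_def)
  show thesis
    using that[OF sum_lowered_less admissible_lowered disjunction_lowered_in[OF assms(2)]] .
qed

lemma quants_in_if_disjunction_in:
  "admissible ks \<Longrightarrow> disjunction ks \<in> L \<Longrightarrow> quants qs B \<in> L"
proof (induction "\<Sum>j<length Ess. ks j" arbitrary: ks rule: less_induct)
  case less
  show ?case
  proof (cases "\<exists>j p. j < length Ess \<and> ks j = Suc p \<and> \<not> qs ! p")
    case True
    then obtain j p where j: "j < length Ess" "ks j = Suc p" "\<not> qs ! p" by blast
    have "(\<Sum>i<length Ess. (ks(j := p)) i) < (\<Sum>i<length Ess. ks i)"
      using j by (intro sum_strict_mono_ex1) auto
    then show ?thesis using less exists_step[OF less.prems(1) j] by blast
  next
    case no_existential: False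
    show ?thesis
    proof (cases "\<exists>j<length Ess. 0 < ks j")
      case True
      have "\<forall>j<length Ess. 0 < ks j \<longrightarrow> qs ! (ks j - 1)"
        using no_existential by (metis Suc_pred')
      then show ?thesis
        using universal_step_applies[OF less.prems True] less.hyps by blast
    next
      case False
      then have "partial_inst ks j = quants qs B" if "j < length Ess" for j
        using that by (simp add: partial_inst_def)
      then have "IQ (Impl (disjunction ks) (quants qs B))"
        unfolding disjunction_def by (intro iqc_Disjs_elim) (auto simp: iqc_imp_refl)
      then show ?thesis using less.prems(2) iqc_mp_in by blast
    qed
  qed
qed

end

context intermediate_logic
begin

theorem quants_in_if_herbrand_instances_provable:
  assumes CD: "CD_instances \<subseteq> L" and "qfree B" and NF: "\<forall>f\<in>funs_fm B. f < NF"
    and herbrand: "provL (prop_fragment L)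
      (Disjs (map (inst_n (count_list qs False) (substf (skolem_sub NF qs Var 0 0) B)) tss))"
  shows "quants qs B \<in> L"
proof -
  define n where "n = count_list qs False"
  define H where "H = substf (skolem_sub NF qs Var 0 0) B"
  define wits :: "(nat \<Rightarrow> trm) \<Rightarrow> trm list" where "wits ts = rev (map ts [0..<n])" for ts
  have "finite (fvf (quants qs B) \<union> (\<Union>ts\<in>set tss. \<Union>e\<in>set (wits ts). fvt e))" by simp
  then obtain N where N: "\<forall>i\<in>fvf (quants qs B) \<union> (\<Union>ts\<in>set tss. \<Union>e\<in>set (wits ts). fvt e). i < N"
    using finite_nat_set_iff_bounded by blast
  interpret herbrand_disjunction L qs B NF N "map wits tss"
  proof unfold_locales
    show "\<forall>Es\<in>set (map wits tss). length Es = count_list qs False"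
      by (simp add: wits_def n_def)
    show "\<forall>i\<in>fvf (quants qs B). i < N" using N by blast
    show "\<forall>Es\<in>set (map wits tss). \<forall>e\<in>set Es. \<forall>i\<in>fvt e. i < N" using N by auto
  qed (fact intermediate CD)+
  have "provL (prop_fragment L) (map_trms unsk (Disjs (map (inst_n n H) tss)))"
    using provL_map_trms[OF herbrand] by (auto simp: prop_fragment_def n_def H_def)
  then have "Disjs (map (map_trms unsk \<circ> inst_n n H) tss) \<in> L"
    using provL_in by (simp add: map_trms_Disjs)
  moreover have "map_trms unsk (inst_n n H ts) = inst_path unsk (quants qs B) (herbrand_path NF qs (wits ts) 0 0)"
    for ts
    using unskolem_herbrand_instance[OF \<open>qfree B\<close> NF] by (simp add: H_def wits_def n_def)
  then have "map (map_trms unsk \<circ> inst_n n H) tss = map (partial_inst (\<lambda>_. length qs)) [0..<length tss]"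
    by (intro nth_equalityI) (simp_all add: partial_inst_def path_def)
  ultimately have "disjunction (\<lambda>_. length qs) \<in> L"
    by (simp add: disjunction_def)
  moreover have "admissible (\<lambda>_. length qs)"
    by (simp add: admissible_def coherent_def)
  ultimately show ?thesis
    using quants_in_if_disjunction_in by blast
qed

end

theorem prenex_conservative:
  assumes "intermediate QL1" and "intermediate QL2"
    and "prop_fragment QL1 = prop_fragment QL2" and "herbrand_existential QL2"
    and "CD_instances \<subseteq> QL1" and "prenex A" and "A \<in> QL2"
  shows "A \<in> QL1"
proof -
  interpret QL1: intermediate_logic QL1 by unfold_locales fact
  interpret QL2: intermediate_logic QL2 by unfold_locales fact
  obtain qs B where A: "A = quants qs B" and "qfree B"
    using prenex_quants[OF \<open>prenex A\<close>] by blast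
  obtain NF where NF: "\<forall>f\<in>funs_fm B. f < NF"
    using finite_funs_fm finite_nat_set_iff_bounded by blast
  let ?H = "substf (skolem_sub NF qs Var 0 0) B"
  have "exs (count_list qs False) ?H \<in> QL2"
    using iqc_skolemize[of Var qs B NF 0 0] QL2.iqc_mp_in \<open>A \<in> QL2\<close> by (simp add: A)
  moreover have "qfree ?H" using \<open>qfree B\<close> by (rule qfree_substf)
  ultimately obtain tss where "provL (prop_fragment QL2) (Disjs (map (inst_n (count_list qs False) ?H) tss))"
    using assms(4) unfolding herbrand_existential_def by blast
  then have "provL (prop_fragment QL1) (Disjs (map (inst_n (count_list qs False) ?H) tss))"
    using assms(3) by simp
  then show ?thesis
    unfolding A by (rule QL1.quants_in_if_herbrand_instances_provable[OF assms(5) \<open>qfree B\<close> NF])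
qed

theorem mainTheorem17:
  assumes "intermediate QL1" and "intermediate QL2" and "QL1 \<subseteq> QL2"
    and "prop_fragment QL1 = prop_fragment QL2"
    and "herbrand_existential QL2"
  shows "(\<forall>A. existential A \<longrightarrow> (A \<in> QL1 \<longleftrightarrow> A \<in> QL2))
       \<and> (CD_instances \<subseteq> QL1 \<longrightarrow> (\<forall>A. prenex A \<longrightarrow> (A \<in> QL1 \<longleftrightarrow> A \<in> QL2)))"
  using existential_conservative[OF assms(1,4,5)] prenex_conservative[OF assms(1,2,4,5)] assms(3)
  by blast

end
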